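(* Let $\mathcal V$ be a quaternionic Hermitian vector space of real dimension $4n$ with $n>1$, and let $\gamma_I,\gamma_J,\gamma_K\in\Lambda^2\mathcal V^*$ satisfy $$\gamma_I\wedge\omega_J=\gamma_J\wedge\omega_I,\qquad \gamma_J\wedge\omega_K=\gamma_K\wedge\omega_J,\qquad \gamma_K\wedge\omega_I=\gamma_I\wedge\omega_K .$$ Then $\langle\gamma_I,\omega_I\rangle=\langle\gamma_J,\omega_J\rangle=\langle\gamma_K,\omega_K\rangle$, and $\gamma_A=c\,\omega_A$ for $A=I,J,K$, where $2n\,c=\langle\gamma_I,\omega_I\rangle$.
   Context: $\mathcal V$ is a real $4n$-dimensional vector space with inner product $\langle\cdot,\cdot\rangle$ and endomorphisms $I,J,K$ with $I^2=J^2=-1$, $K=IJ=-JI$, $\langle Ax,Ay\rangle=\langle x,y\rangle$; $\omega_A(x,y)=\langle x,Ay\rangle$. The inner product on 2-forms is $\langle a,b\rangle=\tfrac12\sum_{i,j}a(e_i,e_j)b(e_i,e_j)$ for an orthonormal basis $\{e_i\}$; $\wedge$ is the exterior product of forms. *)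

theory Defs
  imports "HOL-Analysis.Analysis"
begin

definition quat_hermitian :: "('v::euclidean_space \<Rightarrow> 'v) \<Rightarrow> ('v \<Rightarrow> 'v) \<Rightarrow> ('v \<Rightarrow> 'v) \<Rightarrow> bool" where
  "quat_hermitian I J K \<longleftrightarrow>
     linear I \<and> linear J \<and> linear K \<and>
     (\<forall>x. I (I x) = - x) \<and> (\<forall>x. J (J x) = - x) \<and>
     (\<forall>x. K x = I (J x)) \<and> (\<forall>x. K x = - J (I x)) \<and>
     (\<forall>x y. I x \<bullet> I y = x \<bullet> y) \<and> (\<forall>x y. J x \<bullet> J y = x \<bullet> y) \<and>
     (\<forall>x y. K x \<bullet> K y = x \<bullet> y)"

definition omega :: "('v::euclidean_space \<Rightarrow> 'v) \<Rightarrow> 'v \<Rightarrow> 'v \<Rightarrow> real" where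
  "omega A x y = x \<bullet> A y"

definition two_form :: "('v::euclidean_space \<Rightarrow> 'v \<Rightarrow> real) \<Rightarrow> bool" where
  "two_form a \<longleftrightarrow> bilinear a \<and> (\<forall>x. a x x = 0)"

definition wedge2 :: "('v \<Rightarrow> 'v \<Rightarrow> real) \<Rightarrow> ('v \<Rightarrow> 'v \<Rightarrow> real) \<Rightarrow> 'v \<Rightarrow> 'v \<Rightarrow> 'v \<Rightarrow> 'v \<Rightarrow> real" where
  "wedge2 a b x1 x2 x3 x4 =
     a x1 x2 * b x3 x4 - a x1 x3 * b x2 x4 + a x1 x4 * b x2 x3
   + a x2 x3 * b x1 x4 - a x2 x4 * b x1 x3 + a x3 x4 * b x1 x2"

definition form_inner :: "('v::euclidean_space \<Rightarrow> 'v \<Rightarrow> real) \<Rightarrow> ('v \<Rightarrow> 'v \<Rightarrow> real) \<Rightarrow> real" where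
  "form_inner a b = (1/2) * (\<Sum>i\<in>Basis. \<Sum>j\<in>Basis. a i j * b i j)"

end

theory Submission
  imports Defs
begin

(* The argument only uses d > 4, which follows from d = 4n
   with n > 1.  The proof is a contraction argument.

   1. Contracting a 4-form  X \<and> omega B  against omega C  (i.e. summing its values
      on (x, y, e_i, C e_i) over an orthonormal basis) yields an explicit 2-form built from
      X, the compositions C B and the traces  \<Sum>i X(e_i, C e_i)  (lemma wedge2_contraction).
   2. Contracting each wedge relation with omega I, omega J, omega K gives three linear
      identities between the 2-forms (wedge_relation_contractions).
   3. A fixed linear combination of ten instances of these identities (with arguments
      rotated by I, J, K) eliminates everything except  d (d - 4) gJ,  which is therefore a
      combination of omega I, omega J, omega K; by cyclic symmetry the same holds for gI, gK
      (wedge_relations_quat_span).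
   4. Substituting such combinations back into the contracted identities forces
      gI = c omega I and gJ = c omega J (quat_span_pair_coefficients); a cyclic shift gives
      gK = c omega K, and <c omega A, omega A> = (d/2) c computes the inner products. *)


section \<open>Algebra of a quaternionic Hermitian structure\<close>

lemma quat_hermitian_linear:
  assumes "quat_hermitian I J K"
  shows "linear I" "linear J" "linear K"
  using assms unfolding quat_hermitian_def by auto

lemma quat_hermitian_neg:
  assumes "quat_hermitian I J K"
  shows "I (- x) = - I x" "J (- x) = - J x" "K (- x) = - K x"
  using quat_hermitian_linear[OF assms] by (simp_all add: linear_neg)

lemma quat_hermitian_products:
  assumes q: "quat_hermitian I J K"
  shows "I (I x) = - x" "J (J x) = - x" "K (K x) = - x"
    "I (J x) = K x" "J (K x) = I x" "K (I x) = J x"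
    "J (I x) = - K x" "K (J x) = - I x" "I (K x) = - J x"
proof -
  have II: "\<And>x. I (I x) = - x" and JJ: "\<And>x. J (J x) = - x"
    and KIJ: "\<And>x. K x = I (J x)" and KJI: "\<And>x. K x = - J (I x)"
    using q unfolding quat_hermitian_def by auto
  note N = quat_hermitian_neg[OF q]
  show "I (I x) = - x" "J (J x) = - x" "I (J x) = K x" using II JJ KIJ by simp_all
  show "J (I x) = - K x" using KJI by simp
  show "K (K x) = - x" using KIJ KJI II JJ N by (metis minus_minus)
  show "J (K x) = I x" using KJI JJ II N by (metis minus_minus)
  show "K (I x) = J x" using KJI II N by (metis minus_minus)
  show "K (J x) = - I x" using KIJ JJ N by metis
  show "I (K x) = - J x" using KIJ II by metis
qed

lemma orthogonal_complex_structure_skew: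
  assumes lin: "linear A" and sq: "\<And>x. A (A x) = - x" and orth: "\<And>x y. A x \<bullet> A y = x \<bullet> y"
  shows "A u \<bullet> v = - (u \<bullet> A v)"
proof -
  have "A u \<bullet> v = A u \<bullet> A (A (- v))" by (simp add: sq)
  also have "\<dots> = u \<bullet> A (- v)" by (rule orth)
  also have "\<dots> = - (u \<bullet> A v)" by (simp add: linear_neg[OF lin])
  finally show ?thesis .
qed

lemma quat_hermitian_skew:
  assumes q: "quat_hermitian I J K"
  shows "I u \<bullet> v = - (u \<bullet> I v)" "J u \<bullet> v = - (u \<bullet> J v)" "K u \<bullet> v = - (u \<bullet> K v)"
proof -
  have "\<And>x y. I x \<bullet> I y = x \<bullet> y" "\<And>x y. J x \<bullet> J y = x \<bullet> y" "\<And>x y. K x \<bullet> K y = x \<bullet> y"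
    using q unfolding quat_hermitian_def by auto
  with quat_hermitian_linear[OF q] quat_hermitian_products(1-3)[OF q]
  show "I u \<bullet> v = - (u \<bullet> I v)" "J u \<bullet> v = - (u \<bullet> J v)" "K u \<bullet> v = - (u \<bullet> K v)"
    by (metis orthogonal_complex_structure_skew)+
qed

lemma quat_hermitian_isotropic:
  assumes q: "quat_hermitian I J K"
  shows "x \<bullet> I x = 0" "x \<bullet> J x = 0" "x \<bullet> K x = 0"
  using quat_hermitian_skew[OF q, of x x] by (simp_all add: inner_commute)

text \<open>The hypotheses of the theorem are invariant under the cyclic shift (I, J, K) \<mapsto> (J, K, I);
  this lets every lemma below be applied to the three wedge relations in turn.\<close>

lemma quat_hermitian_cyclic:
  assumes q: "quat_hermitian I J K"
  shows "quat_hermitian J K I"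
  using q quat_hermitian_products[OF q] unfolding quat_hermitian_def by auto


section \<open>Two-forms and contractions\<close>

lemma two_form_antisym:
  assumes a: "two_form a"
  shows "a v u = - a u v"
proof -
  have b: "bilinear a" and z: "\<And>x. a x x = 0" using a unfolding two_form_def by auto
  have l1: "\<And>u. linear (a u)" and l2: "\<And>v. linear (\<lambda>u. a u v)"
    using b unfolding bilinear_def by auto
  have "a (u + v) (u + v) = a u u + a u v + a v u + a v v"
    using l1 l2 linear_add by (metis (no_types, lifting) add.assoc)
  then show ?thesis using z[of u] z[of v] z[of "u + v"] by linarith
qed

lemma two_form_neg:
  assumes a: "two_form a"
  shows "a (- u) v = - a u v" "a u (- v) = - a u v"
proof -
  have "linear (\<lambda>u. a u v)" "linear (a u)" using a unfolding two_form_def bilinear_def by auto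
  then show "a (- u) v = - a u v" "a u (- v) = - a u v" by (auto dest: linear_neg)
qed

lemma sum_basis_norms: "(\<Sum>i\<in>(Basis::'v::euclidean_space set). i \<bullet> i) = real DIM('v)"
  by (simp add: inner_Basis)

text \<open>The trace  \<Sum>i X(e_i, A e_i)  of a bilinear form against an endomorphism; for X a 2-form
  it equals -2 <X, omega A>.\<close>

definition form_trace :: "('v::euclidean_space \<Rightarrow> 'v \<Rightarrow> real) \<Rightarrow> ('v \<Rightarrow> 'v) \<Rightarrow> real" where
  "form_trace X A = (\<Sum>i\<in>Basis. X i (A i))"

lemma bilinear_basis_expansion:
  fixes X :: "'v::euclidean_space \<Rightarrow> 'v \<Rightarrow> real"
  assumes "bilinear X" "linear M"
  shows "(\<Sum>i\<in>Basis. X u (M i) * (z \<bullet> i)) = X u (M z)"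
proof -
  have l: "linear (\<lambda>y. X u (M y))"
    using assms unfolding bilinear_def by (auto intro: linear_compose[unfolded o_def])
  have "X u (M z) = X u (M (\<Sum>i\<in>Basis. (z \<bullet> i) *\<^sub>R i))" by (simp add: euclidean_representation)
  also have "\<dots> = (\<Sum>i\<in>Basis. (z \<bullet> i) * X u (M i))"
    by (simp add: linear_sum[OF l] linear_scale[OF l])
  finally show ?thesis by (simp add: mult.commute)
qed

lemma wedge2_contraction:
  fixes X :: "'v::euclidean_space \<Rightarrow> 'v \<Rightarrow> real"
  assumes X: "bilinear X" and X_anti: "\<And>u v. X v u = - X u v"
    and C: "linear C"
    and B_skew: "\<And>u v. B u \<bullet> v = - (u \<bullet> B v)" and C_skew: "\<And>u v. C u \<bullet> v = - (u \<bullet> C v)"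
  shows "(\<Sum>i\<in>Basis. wedge2 X (omega B) x y i (C i)) =
     (\<Sum>i\<in>Basis. i \<bullet> B (C i)) * X x y - 2 * (X x (C (B y)) + X (C (B x)) y)
     + form_trace X C * omega B x y"
proof -
  have id: "linear (\<lambda>x::'v. x)" by (rule linear_id[unfolded id_def])
  have BC: "\<And>w i. w \<bullet> B (C i) = C (B w) \<bullet> i" using B_skew C_skew by (metis minus_minus)
  have B': "\<And>w i. w \<bullet> B i = - (B w \<bullet> i)" using B_skew by (metis minus_minus)
  have s1: "(\<Sum>i\<in>Basis. X x i * omega B y (C i)) = X x (C (B y))"
    using bilinear_basis_expansion[OF X id, of x "C (B y)"] by (simp add: omega_def BC)
  have s2: "(\<Sum>i\<in>Basis. X x (C i) * omega B y i) = - X x (C (B y))"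
    using bilinear_basis_expansion[OF X C, of x "B y"] by (simp add: omega_def B' sum_negf)
  have s3: "(\<Sum>i\<in>Basis. X y i * omega B x (C i)) = X y (C (B x))"
    using bilinear_basis_expansion[OF X id, of y "C (B x)"] by (simp add: omega_def BC)
  have s4: "(\<Sum>i\<in>Basis. X y (C i) * omega B x i) = - X y (C (B x))"
    using bilinear_basis_expansion[OF X C, of y "B x"] by (simp add: omega_def B' sum_negf)
  have "(\<Sum>i\<in>Basis. wedge2 X (omega B) x y i (C i)) =
      X x y * (\<Sum>i\<in>Basis. omega B i (C i)) - (\<Sum>i\<in>Basis. X x i * omega B y (C i))
      + (\<Sum>i\<in>Basis. X x (C i) * omega B y i) + (\<Sum>i\<in>Basis. X y i * omega B x (C i))
      - (\<Sum>i\<in>Basis. X y (C i) * omega B x i) + (\<Sum>i\<in>Basis. X i (C i)) * omega B x y"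
    unfolding wedge2_def by (simp add: sum.distrib sum_subtractf sum_distrib_left sum_distrib_right)
  also have "\<dots> = (\<Sum>i\<in>Basis. i \<bullet> B (C i)) * X x y - 2 * (X x (C (B y)) + X (C (B x)) y)
     + form_trace X C * omega B x y"
    unfolding s1 s2 s3 s4 form_trace_def using X_anti[of "C (B x)" y]
    by (simp add: omega_def algebra_simps)
  finally show ?thesis .
qed

lemma wedge_relation_contractions:
  fixes a b :: "'v::euclidean_space \<Rightarrow> 'v \<Rightarrow> real"
  assumes q: "quat_hermitian I J K" and ta: "two_form a" and tb: "two_form b"
    and w: "wedge2 a (omega J) = wedge2 b (omega I)"
  defines "d \<equiv> real DIM('v)"
  shows "(4 - d) * a x y + form_trace a J * omega J x y
           = 2 * (b x (K y) + b (K x) y) + form_trace b J * omega I x y"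
    and "(4 - d) * b x y + form_trace b I * omega I x y
           = - 2 * (a x (K y) + a (K x) y) + form_trace a I * omega J x y"
    and "2 * (a x (I y) + a (I x) y) + form_trace a K * omega J x y
           = - 2 * (b x (J y) + b (J x) y) + form_trace b K * omega I x y"
proof -
  note L = quat_hermitian_linear[OF q] and S = quat_hermitian_skew[OF q]
  have a2: "bilinear a" and b2: "bilinear b" using ta tb unfolding two_form_def by auto
  note cA = wedge2_contraction[OF a2 two_form_antisym[OF ta] _ S(2)]
  note cB = wedge2_contraction[OF b2 two_form_antisym[OF tb] _ S(1)]
  note simps = quat_hermitian_products[OF q] quat_hermitian_neg[OF q]
    quat_hermitian_isotropic[OF q] two_form_neg[OF ta] two_form_neg[OF tb]
    inner_minus_right sum_negf sum_basis_norms d_def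
  have "(\<Sum>i\<in>Basis. wedge2 a (omega J) x y i (J i)) = (\<Sum>i\<in>Basis. wedge2 b (omega I) x y i (J i))"
    by (simp add: w)
  then show "(4 - d) * a x y + form_trace a J * omega J x y
           = 2 * (b x (K y) + b (K x) y) + form_trace b J * omega I x y"
    unfolding cA[OF L(2) S(2)] cB[OF L(2) S(2)] by (simp add: simps algebra_simps)
  have "(\<Sum>i\<in>Basis. wedge2 a (omega J) x y i (I i)) = (\<Sum>i\<in>Basis. wedge2 b (omega I) x y i (I i))"
    by (simp add: w)
  then show "(4 - d) * b x y + form_trace b I * omega I x y
           = - 2 * (a x (K y) + a (K x) y) + form_trace a I * omega J x y"
    unfolding cA[OF L(1) S(1)] cB[OF L(1) S(1)] by (simp add: simps algebra_simps)
  have "(\<Sum>i\<in>Basis. wedge2 a (omega J) x y i (K i)) = (\<Sum>i\<in>Basis. wedge2 b (omega I) x y i (K i))"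
    by (simp add: w)
  then show "2 * (a x (I y) + a (I x) y) + form_trace a K * omega J x y
           = - 2 * (b x (J y) + b (J x) y) + form_trace b K * omega I x y"
    unfolding cA[OF L(3) S(3)] cB[OF L(3) S(3)] by (simp add: simps algebra_simps)
qed


section \<open>Each form lies in the span of omega I, omega J, omega K\<close>

text \<open>The scalar elimination behind the span property: the left side minus the right side of
  the conclusion is an explicit combination of the ten hypotheses.\<close>

lemma contraction_elimination:
  fixes d tcI taI tbK tcK taK tbI tcJ taJ xy xIy xJy xKy b c1 c2 a1 a2 a3 a4 b2 c3 c4 :: real
  assumes
    h1: "(4 - d)*c1 + tcI*xy = 2*(a1 - a2) + taI*xJy" and
    h2: "(4 - d)*c2 - tcI*xy = 2*(a4 - a3) + taI*xJy" and
    h3: "(4 - d)*b + tbK*xKy = 2*(c2 + c1) + tcK*xJy" and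
    h4: "2*(a4 + a2) + taK*xy = -2*(b2 - b) + tbK*xKy" and
    h5: "2*(a3 + a1) - taK*xy = -2*(b2 - b) + tbK*xKy" and
    h6: "2*(b2 - b) - tbI*xIy = -2*(c3 - c1) + tcI*xy" and
    h7: "2*(b2 - b) - tbI*xIy = -2*(c4 - c2) - tcI*xy" and
    h8: "2*(c3 - c1) + tcJ*xKy = -2*(a4 + a2) - taJ*xIy" and
    h9: "2*(c4 - c2) + tcJ*xKy = -2*(a3 + a1) - taJ*xIy" and
    h10: "(4 - d)*b + tbI*xIy = -2*(a3 + a2) + taI*xJy"
  shows "d*(d - 4)*b = (2*tbI - 2*taJ)*xIy + (4 - d)*tcK*xJy + ((d - 2)*tbK - 2*tcJ)*xKy"
proof -
  have "d*(d - 4)*b - ((2*tbI - 2*taJ)*xIy + (4 - d)*tcK*xJy + ((d - 2)*tbK - 2*tcJ)*xKy)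
    = (4 - d)*(((4 - d)*b + tbK*xKy) - (2*(c2 + c1) + tcK*xJy))
      + 2*(((4 - d)*c1 + tcI*xy) - (2*(a1 - a2) + taI*xJy))
      + 2*(((4 - d)*c2 - tcI*xy) - (2*(a4 - a3) + taI*xJy))
      + ((2*(a4 + a2) + taK*xy) - (-2*(b2 - b) + tbK*xKy))
      + ((2*(a3 + a1) - taK*xy) - (-2*(b2 - b) + tbK*xKy))
      - ((2*(b2 - b) - tbI*xIy) - (-2*(c3 - c1) + tcI*xy))
      - ((2*(b2 - b) - tbI*xIy) - (-2*(c4 - c2) - tcI*xy))
      + ((2*(c3 - c1) + tcJ*xKy) - (-2*(a4 + a2) - taJ*xIy))
      + ((2*(c4 - c2) + tcJ*xKy) - (-2*(a3 + a1) - taJ*xIy))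
      - 4*(((4 - d)*b + tbI*xIy) - (-2*(a3 + a2) + taI*xJy))"
    by (simp add: algebra_simps)
  also have "\<dots> = 0" using assms by simp
  finally show ?thesis by simp
qed

text \<open>Ten contracted identities, taken from all three wedge relations and evaluated at
  arguments rotated by I, J, K, combine to express  d (d - 4) b  through omega I, J, K.\<close>

lemma wedge_relations_span_identity:
  fixes a b c :: "'v::euclidean_space \<Rightarrow> 'v \<Rightarrow> real"
  assumes q: "quat_hermitian I J K" and ta: "two_form a" and tb: "two_form b" and tc: "two_form c"
    and w1: "wedge2 a (omega J) = wedge2 b (omega I)"
    and w2: "wedge2 b (omega K) = wedge2 c (omega J)"
    and w3: "wedge2 c (omega I) = wedge2 a (omega K)"
  defines "d \<equiv> real DIM('v)"
  shows "d * (d - 4) * b x y = (2 * form_trace b I - 2 * form_trace a J) * omega I x y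
           + (4 - d) * form_trace c K * omega J x y
           + ((d - 2) * form_trace b K - 2 * form_trace c J) * omega K x y"
proof -
  note E1 = wedge_relation_contractions[OF q ta tb w1]
  note E2 = wedge_relation_contractions[OF quat_hermitian_cyclic[OF q] tb tc w2]
  note E3 = wedge_relation_contractions[OF quat_hermitian_cyclic[OF quat_hermitian_cyclic[OF q]] tc ta w3]
  note simps = quat_hermitian_products[OF q] quat_hermitian_skew[OF q] quat_hermitian_neg[OF q]
    quat_hermitian_isotropic[OF q] two_form_neg[OF ta] two_form_neg[OF tb] two_form_neg[OF tc]
    inner_minus_right inner_minus_left omega_def d_def[symmetric]
  let ?t = form_trace
  have h1: "(4 - d) * c (I x) y + ?t c I * (x \<bullet> y) = 2 * (a (I x) (J y) - a (K x) y) + ?t a I * (x \<bullet> J y)"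
    using E3(1)[where x = "I x" and y = y] by (simp add: simps)
  have h2: "(4 - d) * c x (I y) - ?t c I * (x \<bullet> y) = 2 * (a (J x) (I y) - a x (K y)) + ?t a I * (x \<bullet> J y)"
    using E3(1)[where x = x and y = "I y"] by (simp add: simps)
  have h3: "(4 - d) * b x y + ?t b K * (x \<bullet> K y) = 2 * (c x (I y) + c (I x) y) + ?t c K * (x \<bullet> J y)"
    using E2(1)[where x = x and y = y] by (simp add: simps)
  have h4: "2 * (a (J x) (I y) + a (K x) y) + ?t a K * (x \<bullet> y) = -2 * (b (J x) (J y) - b x y) + ?t b K * (x \<bullet> K y)"
    using E1(3)[where x = "J x" and y = y] by (simp add: simps)
  have h5: "2 * (a x (K y) + a (I x) (J y)) - ?t a K * (x \<bullet> y) = -2 * (b (J x) (J y) - b x y) + ?t b K * (x \<bullet> K y)"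
    using E1(3)[where x = x and y = "J y"] by (simp add: simps)
  have h6: "2 * (b (J x) (J y) - b x y) - ?t b I * (x \<bullet> I y) = -2 * (c (J x) (K y) - c (I x) y) + ?t c I * (x \<bullet> y)"
    using E2(3)[where x = "J x" and y = y] by (simp add: simps)
  have h7: "2 * (b (J x) (J y) - b x y) - ?t b I * (x \<bullet> I y) = -2 * (c (K x) (J y) - c x (I y)) - ?t c I * (x \<bullet> y)"
    using E2(3)[where x = x and y = "J y"] by (simp add: simps)
  have h8: "2 * (c (J x) (K y) - c (I x) y) + ?t c J * (x \<bullet> K y) = -2 * (a (J x) (I y) + a (K x) y) - ?t a J * (x \<bullet> I y)"
    using E3(3)[where x = "J x" and y = y] by (simp add: simps)
  have h9: "2 * (c (K x) (J y) - c x (I y)) + ?t c J * (x \<bullet> K y) = -2 * (a x (K y) + a (I x) (J y)) - ?t a J * (x \<bullet> I y)"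
    using E3(3)[where x = x and y = "J y"] by (simp add: simps)
  have h10: "(4 - d) * b x y + ?t b I * (x \<bullet> I y) = -2 * (a x (K y) + a (K x) y) + ?t a I * (x \<bullet> J y)"
    using E1(2)[where x = x and y = y] by (simp add: simps)
  show ?thesis
    using contraction_elimination[OF h1 h2 h3 h4 h5 h6 h7 h8 h9 h10] unfolding omega_def by simp
qed


definition quat_span :: "('v::euclidean_space \<Rightarrow> 'v) \<Rightarrow> ('v \<Rightarrow> 'v) \<Rightarrow> ('v \<Rightarrow> 'v) \<Rightarrow> ('v \<Rightarrow> 'v \<Rightarrow> real) \<Rightarrow> bool"
  where "quat_span I J K X \<longleftrightarrow> (\<exists>p q r. X = (\<lambda>x y. p * omega I x y + q * omega J x y + r * omega K x y))"

lemma quat_span_cyclic: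
  assumes "quat_span I J K X"
  shows "quat_span J K I X"
proof -
  obtain p q r where "X = (\<lambda>x y. p * omega I x y + q * omega J x y + r * omega K x y)"
    using assms unfolding quat_span_def by blast
  then have "X = (\<lambda>x y. q * omega J x y + r * omega K x y + p * omega I x y)"
    by (simp add: algebra_simps)
  then show ?thesis unfolding quat_span_def by blast
qed

lemma quat_span_if_scaled:
  assumes X: "\<And>x y. D * X x y = p * omega I x y + q * omega J x y + r * omega K x y" and D: "D \<noteq> 0"
  shows "quat_span I J K X"
proof -
  have "X = (\<lambda>x y. p/D * omega I x y + q/D * omega J x y + r/D * omega K x y)"
  proof (intro ext)
    fix x y
    show "X x y = p/D * omega I x y + q/D * omega J x y + r/D * omega K x y"
      using X[of x y] D by (simp add: field_simps)
  qed
  then show ?thesis unfolding quat_span_def by blast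
qed

text \<open>When d > 4 the factor d (d - 4) is invertible, so each of the three forms is a
  combination of omega I, omega J, omega K.\<close>

lemma wedge_relations_quat_span:
  fixes a b c :: "'v::euclidean_space \<Rightarrow> 'v \<Rightarrow> real"
  assumes q: "quat_hermitian I J K" and ta: "two_form a" and tb: "two_form b" and tc: "two_form c"
    and w1: "wedge2 a (omega J) = wedge2 b (omega I)"
    and w2: "wedge2 b (omega K) = wedge2 c (omega J)"
    and w3: "wedge2 c (omega I) = wedge2 a (omega K)"
    and dim: "DIM('v) > 4"
  shows "quat_span I J K a" "quat_span I J K b" "quat_span I J K c"
proof -
  have D: "real DIM('v) * (real DIM('v) - 4) \<noteq> 0" using dim by simp
  note q2 = quat_hermitian_cyclic[OF q]
  note q3 = quat_hermitian_cyclic[OF q2]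
  show "quat_span I J K b"
    by (rule quat_span_if_scaled[OF wedge_relations_span_identity[OF q ta tb tc w1 w2 w3] D])
  have "quat_span J K I c"
    by (rule quat_span_if_scaled[OF wedge_relations_span_identity[OF q2 tb tc ta w2 w3 w1] D])
  then show "quat_span I J K c" by (rule quat_span_cyclic[OF quat_span_cyclic])
  have "quat_span K I J a"
    by (rule quat_span_if_scaled[OF wedge_relations_span_identity[OF q3 tc ta tb w3 w1 w2] D])
  then show "quat_span I J K a" by (rule quat_span_cyclic)
qed


section \<open>Determining the coefficients\<close>

lemma form_trace_quat_combination:
  fixes I J K :: "'v::euclidean_space \<Rightarrow> 'v" and p1 p2 p3 :: real
  assumes q: "quat_hermitian I J K"
  defines "X \<equiv> \<lambda>x y. p1 * omega I x y + p2 * omega J x y + p3 * omega K x y"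
  shows "form_trace X I = - real DIM('v) * p1"
    "form_trace X J = - real DIM('v) * p2"
    "form_trace X K = - real DIM('v) * p3"
proof -
  note simps = quat_hermitian_products[OF q] quat_hermitian_neg[OF q] quat_hermitian_isotropic[OF q]
    sum.distrib sum_basis_norms
  show "form_trace X I = - real DIM('v) * p1" "form_trace X J = - real DIM('v) * p2"
    "form_trace X K = - real DIM('v) * p3"
    unfolding form_trace_def X_def omega_def by (simp_all add: simps flip: sum_distrib_left)
qed

text \<open>Two combinations related by  a \<and> omega J = b \<and> omega I  must be  c omega I  and
  c omega J: evaluate the contracted identities at (e, I e), (e, J e), (e, K e) for a unit
  vector e.\<close>

lemma quat_span_pair_coefficients:
  fixes a b :: "'v::euclidean_space \<Rightarrow> 'v \<Rightarrow> real"
  assumes q: "quat_hermitian I J K" and ta: "two_form a" and tb: "two_form b"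
    and w: "wedge2 a (omega J) = wedge2 b (omega I)" and dim: "DIM('v) > 4"
    and sa: "quat_span I J K a" and sb: "quat_span I J K b"
  shows "\<exists>c. a = (\<lambda>x y. c * omega I x y) \<and> b = (\<lambda>x y. c * omega J x y)"
proof -
  obtain p1 p2 p3 where a: "a = (\<lambda>x y. p1 * omega I x y + p2 * omega J x y + p3 * omega K x y)"
    using sa unfolding quat_span_def by blast
  obtain q1 q2 q3 where b: "b = (\<lambda>x y. q1 * omega I x y + q2 * omega J x y + q3 * omega K x y)"
    using sb unfolding quat_span_def by blast
  define d where "d = real DIM('v)"
  obtain e :: 'v where "e \<in> Basis" using nonempty_Basis by blast
  then have ee: "e \<bullet> e = 1" by (simp add: inner_Basis)
  note E = wedge_relation_contractions[OF q ta tb w]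
  note T = form_trace_quat_combination[OF q]
  note simps = quat_hermitian_products[OF q] quat_hermitian_skew[OF q] quat_hermitian_neg[OF q]
    quat_hermitian_isotropic[OF q] inner_minus_right inner_minus_left omega_def ee d_def[symmetric]
  have e1: "(4 - d) * p1 = (4 - d) * q2"
    using E(1)[where x = e and y = "I e", unfolded a b T] by (simp add: simps algebra_simps)
  have e2: "(d - 2) * p2 = 2 * q1"
    using E(1)[where x = e and y = "J e", unfolded a b T] by (simp add: simps algebra_simps)
  have e3: "(4 - d) * p3 = 0"
    using E(1)[where x = e and y = "K e", unfolded a b T] by (simp add: simps algebra_simps)
  have e4: "(d - 2) * q1 = 2 * p2"
    using E(2)[where x = e and y = "I e", unfolded a b T] by (simp add: simps algebra_simps)
  have e5: "(4 - d) * q3 = 0"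
    using E(2)[where x = e and y = "K e", unfolded a b T] by (simp add: simps algebra_simps)
  have d4: "d > 4" using dim unfolding d_def by simp
  have "d * (d - 4) * p2 = 0" using e2 e4 by algebra
  then have p2: "p2 = 0" and q1: "q1 = 0" using d4 e2 by simp_all
  have "p1 = q2" "p3 = 0" "q3 = 0" using e1 e3 e5 d4 by simp_all
  then show ?thesis using a b p2 q1 by auto
qed

lemma omega_scale_cancel:
  fixes A :: "'v::euclidean_space \<Rightarrow> 'v"
  assumes sq: "\<And>x. A (A x) = - x" and eq: "(\<lambda>x y. c * omega A x y) = (\<lambda>x y. c' * omega A x y)"
  shows "c = c'"
proof -
  obtain e :: 'v where "e \<in> Basis" using nonempty_Basis by blast
  then have "omega A e (A e) = -1" by (simp add: omega_def sq inner_Basis)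
  with fun_cong[OF fun_cong[OF eq, of e], of "A e"] show ?thesis by simp
qed

lemma form_inner_scaled_omega:
  fixes A :: "'v::euclidean_space \<Rightarrow> 'v"
  assumes orth: "\<And>x y. A x \<bullet> A y = x \<bullet> y"
  shows "form_inner (\<lambda>x y. c * omega A x y) (omega A) = real DIM('v) / 2 * c"
proof -
  have column: "(\<Sum>i\<in>Basis. (i \<bullet> A j) * (i \<bullet> A j)) = 1" if "j \<in> Basis" for j
  proof -
    have "(\<Sum>i\<in>Basis. (i \<bullet> A j) * (i \<bullet> A j)) = A j \<bullet> A j"
      by (simp add: euclidean_inner[of "A j" "A j"] inner_commute)
    then show ?thesis using that by (simp add: orth inner_Basis)
  qed
  have "form_inner (\<lambda>x y. c * omega A x y) (omega A)
      = 1/2 * (\<Sum>j\<in>Basis. c * (\<Sum>i\<in>Basis. (i \<bullet> A j) * (i \<bullet> A j)))"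
    unfolding form_inner_def omega_def by (subst sum.swap) (simp add: sum_distrib_left mult.assoc)
  also have "\<dots> = 1/2 * (\<Sum>j\<in>(Basis::'v set). c)" by (simp add: column)
  finally show ?thesis by simp
qed


theorem lemma6p5:
  fixes I J K :: "'v::euclidean_space \<Rightarrow> 'v"
    and gI gJ gK :: "'v \<Rightarrow> 'v \<Rightarrow> real"
    and n :: nat
  assumes "DIM('v) = 4 * n" and "n > 1"
    and "quat_hermitian I J K"
    and "two_form gI" and "two_form gJ" and "two_form gK"
    and "wedge2 gI (omega J) = wedge2 gJ (omega I)"
    and "wedge2 gJ (omega K) = wedge2 gK (omega J)"
    and "wedge2 gK (omega I) = wedge2 gI (omega K)"
  shows "form_inner gI (omega I) = form_inner gJ (omega J)
       \<and> form_inner gJ (omega J) = form_inner gK (omega K)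
       \<and> (\<forall>c. 2 * real n * c = form_inner gI (omega I) \<longrightarrow>
              gI = (\<lambda>x y. c * omega I x y) \<and> gJ = (\<lambda>x y. c * omega J x y)
              \<and> gK = (\<lambda>x y. c * omega K x y))"
proof -
  note q = assms(3) and forms = assms(4-6) and rels = assms(7-9)
  have dim: "DIM('v) > 4" using assms(1,2) by simp
  note span = wedge_relations_quat_span[OF q forms rels dim]
  obtain c where gI: "gI = (\<lambda>x y. c * omega I x y)" and gJ: "gJ = (\<lambda>x y. c * omega J x y)"
    using quat_span_pair_coefficients[OF q forms(1,2) rels(1) dim span(1,2)] by blast
  obtain c' where gJ': "gJ = (\<lambda>x y. c' * omega J x y)" and gK: "gK = (\<lambda>x y. c' * omega K x y)"
    using quat_span_pair_coefficients[OF quat_hermitian_cyclic[OF q] forms(2,3) rels(2) dim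
        quat_span_cyclic[OF span(2)] quat_span_cyclic[OF span(3)]] by blast
  have "c' = c"
    using omega_scale_cancel[OF quat_hermitian_products(2)[OF q]] gJ gJ' by metis
  moreover have "form_inner (\<lambda>x y. c * omega A x y) (omega A) = 2 * real n * c"
    if "A \<in> {I, J, K}" for A
    using that q assms(1) form_inner_scaled_omega[of A c] unfolding quat_hermitian_def by auto
  ultimately show ?thesis using gI gJ gK assms(2) by auto
qed

end
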